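(* Let $n\in\mathbb{N}$, let $G=D_n=\langle\sigma,\varrho\mid\sigma^2=e=\varrho^n,\ \sigma\varrho\sigma^{-1}=\varrho^{-1}\rangle$, let $A=\mathbb{C}[[z]]$, and let $\phi:G\to\Aut_{\mathbb{R}}(A)$ be the action given by $\phi_\sigma(\alpha)=\bar\alpha$ for $\alpha\in\mathbb{C}$, $\phi_\sigma(z)=z$, $\phi_\varrho(\alpha)=\alpha$ for $\alpha\in\mathbb{C}$, $\phi_\varrho(z)=\xi z$ with $\xi=\exp(2\pi i/n)$. Then there is an isomorphism of $\mathbb{R}$-algebras $A[G,\phi]\cong M_2(H_n(O))$, where $O=\mathbb{R}[[z^n]]$.
   Context: $A[G,\phi]$ is the skew group ring: the free left $A$-module with basis $\{[g]\}_{g\in G}$ and multiplication $a[f]\cdot b[g]=a\,\phi_f(b)[fg]$. For the complete DVR $O=\mathbb{R}[[z^n]]$, $H_n(O)$ is the ring of $n\times n$ matrices with entries in $O$ on and below the diagonal and in $z^nO$ above the diagonal. *)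

theory Defs
  imports "HOL-Algebra.QuotRing" "HOL-Computational_Algebra.Formal_Power_Series"
begin

text \<open>Skew group ring A[G,phi] of a finite group G over a ring A: the free left A-module
  with basis G, elements u = sum_g u(g)[g] represented by their coefficient functions
  (zero outside carrier G), with a[f] * b[g] = a phi_f(b) [fg].\<close>
definition skew_group_ring ::
  "('g, 'c) monoid_scheme \<Rightarrow> ('a, 'b) ring_scheme \<Rightarrow> ('g \<Rightarrow> 'a \<Rightarrow> 'a) \<Rightarrow> ('g \<Rightarrow> 'a) ring" where
  "skew_group_ring G A \<phi> =
    \<lparr>carrier = {u. (\<forall>g\<in>carrier G. u g \<in> carrier A) \<and> (\<forall>g. g \<notin> carrier G \<longrightarrow> u g = \<zero>\<^bsub>A\<^esub>)},
     monoid.mult = (\<lambda>u v h. if h \<in> carrier G then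
        finsum A (\<lambda>(f, g). if f \<otimes>\<^bsub>G\<^esub> g = h then u f \<otimes>\<^bsub>A\<^esub> \<phi> f (v g) else \<zero>\<^bsub>A\<^esub>)
               (carrier G \<times> carrier G)
        else \<zero>\<^bsub>A\<^esub>),
     one = (\<lambda>g. if g = \<one>\<^bsub>G\<^esub> then \<one>\<^bsub>A\<^esub> else \<zero>\<^bsub>A\<^esub>),
     zero = (\<lambda>g. \<zero>\<^bsub>A\<^esub>),
     add = (\<lambda>u v g. if g \<in> carrier G then u g \<oplus>\<^bsub>A\<^esub> v g else \<zero>\<^bsub>A\<^esub>)\<rparr>"

definition mat_ring :: "('a, 'b) ring_scheme \<Rightarrow> nat \<Rightarrow> (nat \<Rightarrow> nat \<Rightarrow> 'a) ring" where
  "mat_ring R m =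
    \<lparr>carrier = {M. (\<forall>i j. i < m \<and> j < m \<longrightarrow> M i j \<in> carrier R) \<and>
                   (\<forall>i j. \<not> (i < m \<and> j < m) \<longrightarrow> M i j = \<zero>\<^bsub>R\<^esub>)},
     monoid.mult = (\<lambda>M N i j. if i < m \<and> j < m then finsum R (\<lambda>k. M i k \<otimes>\<^bsub>R\<^esub> N k j) {..<m}
                              else \<zero>\<^bsub>R\<^esub>),
     one = (\<lambda>i j. if i < m \<and> j < m \<and> i = j then \<one>\<^bsub>R\<^esub> else \<zero>\<^bsub>R\<^esub>),
     zero = (\<lambda>i j. \<zero>\<^bsub>R\<^esub>),
     add = (\<lambda>M N i j. if i < m \<and> j < m then M i j \<oplus>\<^bsub>R\<^esub> N i j else \<zero>\<^bsub>R\<^esub>)\<rparr>"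

text \<open>Dihedral group D_n of order 2n: the element (s,k) (k < n) stands for sigma^s rho^k.
  Since rho^k sigma = sigma rho^(-k), (s1,k1)(s2,k2) = (s1 xor s2, (+-k1 + k2) mod n).\<close>
definition dihedral :: "nat \<Rightarrow> (bool \<times> nat) monoid" where
  "dihedral n =
    \<lparr>carrier = UNIV \<times> {..<n},
     monoid.mult = (\<lambda>(s1, k1) (s2, k2). (s1 \<noteq> s2, ((if s2 then n - k1 else k1) + k2) mod n)),
     one = (False, 0)\<rparr>"

definition fps_ring :: "'a::comm_ring_1 fps ring" where
  "fps_ring = \<lparr>carrier = UNIV, monoid.mult = (*), one = 1, zero = 0, add = (+)\<rparr>"

definition xi :: "nat \<Rightarrow> complex" where
  "xi n = exp (2 * complex_of_real pi * \<i> / of_nat n)"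

definition phi_sigma :: "complex fps \<Rightarrow> complex fps" where
  "phi_sigma a = Abs_fps (\<lambda>m. cnj (fps_nth a m))"

definition phi_rho :: "nat \<Rightarrow> complex fps \<Rightarrow> complex fps" where
  "phi_rho n a = Abs_fps (\<lambda>m. xi n ^ m * fps_nth a m)"

definition dihedral_action :: "nat \<Rightarrow> bool \<times> nat \<Rightarrow> complex fps \<Rightarrow> complex fps" where
  "dihedral_action n g = (if fst g then phi_sigma else id) \<circ> (phi_rho n ^^ snd g)"

definition skew_ring_Dn :: "nat \<Rightarrow> (bool \<times> nat \<Rightarrow> complex fps) ring" where
  "skew_ring_Dn n = skew_group_ring (dihedral n) (fps_ring :: complex fps ring) (dihedral_action n)"

definition O_set :: "nat \<Rightarrow> real fps set" where
  "O_set n = {f. \<forall>k. \<not> n dvd k \<longrightarrow> fps_nth f k = 0}"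

definition O_ring :: "nat \<Rightarrow> real fps ring" where
  "O_ring n = (fps_ring :: real fps ring)\<lparr>carrier := O_set n\<rparr>"

definition H_ring :: "nat \<Rightarrow> (nat \<Rightarrow> nat \<Rightarrow> real fps) ring" where
  "H_ring n = (mat_ring (O_ring n) n)\<lparr>carrier :=
     {M \<in> carrier (mat_ring (O_ring n) n).
        \<forall>i j. i < j \<and> j < n \<longrightarrow> (\<exists>g \<in> O_set n. M i j = fps_X ^ n * g)}\<rparr>"

definition M2H_ring :: "nat \<Rightarrow> (nat \<Rightarrow> nat \<Rightarrow> (nat \<Rightarrow> nat \<Rightarrow> real fps)) ring" where
  "M2H_ring n = mat_ring (H_ring n) 2"

definition skew_scale :: "real \<Rightarrow> (bool \<times> nat \<Rightarrow> complex fps) \<Rightarrow> (bool \<times> nat \<Rightarrow> complex fps)" where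
  "skew_scale r u = (\<lambda>g. fps_const (complex_of_real r) * u g)"

definition M2H_scale :: "real \<Rightarrow> (nat \<Rightarrow> nat \<Rightarrow> (nat \<Rightarrow> nat \<Rightarrow> real fps))
                          \<Rightarrow> (nat \<Rightarrow> nat \<Rightarrow> (nat \<Rightarrow> nat \<Rightarrow> real fps))" where
  "M2H_scale r M = (\<lambda>i j p q. fps_const r * M i j p q)"

end

theory Submission
  imports Defs
begin

text \<open>The skew group ring acts on \<open>A = \<complex>[[z]]\<close> by \<open>u \<cdot> b = \<Sum>\<^sub>g u(g) \<phi>\<^sub>g(b)\<close>,
  and this action commutes with multiplication by the invariant ring \<open>O = \<real>[[z\<^sup>n]]\<close>.
  As an \<open>O\<close>-module, \<open>A\<close> is free on \<open>\<i>\<^sup>j z\<^sup>q\<close> (\<open>j < 2\<close>, \<open>q < n\<close>), so each \<open>u\<close> yields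
  a \<open>2 \<times> 2\<close> block matrix of \<open>n \<times> n\<close> matrices over \<open>O\<close>. On the basis,
  \<open>u \<cdot> (c z\<^sup>q) = (P\<^sub>q c + Q\<^sub>q c\<^sup>*) z\<^sup>q\<close>, where \<open>P\<close> and \<open>Q\<close> are the discrete Fourier
  transforms, at \<open>\<xi>\<close> and \<open>\<xi>\<^sup>*\<close>, of the coefficients of \<open>u\<close> on rotations and on
  reflections. Divisibility by \<open>z\<^sup>q\<close> puts the entries above the diagonal of each block into
  \<open>z\<^sup>n O\<close>. Since the Fourier transform is invertible and \<open>(P\<^sub>q, Q\<^sub>q)\<close> is recovered from
  \<open>P\<^sub>q c + Q\<^sub>q c\<^sup>*\<close> at \<open>c = 1, \<i>\<close>, the matrix determines \<open>u\<close>, and every matrix in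
  \<open>M\<^sub>2(H\<^sub>n(O))\<close> occurs.\<close>

unbundle fps_syntax

section \<open>Primitive roots of unity and the discrete Fourier transform\<close>

definition primitive_root_of_unity :: "nat \<Rightarrow> 'a::monoid_mult \<Rightarrow> bool" where
  "primitive_root_of_unity n w \<longleftrightarrow> (\<forall>d. w ^ d = 1 \<longleftrightarrow> n dvd d)"

lemma primitive_root_of_unity_power_mod:
  assumes "primitive_root_of_unity n w"
  shows "w ^ (m mod n) = w ^ m"
proof -
  have "w ^ m = w ^ (n * (m div n) + m mod n)" by simp
  also have "\<dots> = (w ^ n) ^ (m div n) * w ^ (m mod n)" by (simp only: power_add power_mult)
  finally have "w ^ m = (w ^ n) ^ (m div n) * w ^ (m mod n)" .
  moreover have "w ^ n = 1" using assms by (simp add: primitive_root_of_unity_def)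
  ultimately show ?thesis by simp
qed

lemma primitive_root_of_unity_power_eq_iff:
  fixes w :: "'a::comm_monoid_mult"
  assumes w: "primitive_root_of_unity n w" and "j < n" "k < n"
  shows "w ^ j = w ^ k \<longleftrightarrow> j = k"
proof
  have inj: "j = k" if jk: "j \<le> k" "w ^ j = w ^ k" "k < n" for j k
  proof -
    have "w ^ n = 1" using w by (simp add: primitive_root_of_unity_def)
    then have inv: "w ^ (n - j) * w ^ j = 1" using jk(1,3) by (simp flip: power_add)
    have "w ^ (k - j) = w ^ (n - j) * (w ^ j * w ^ (k - j))"
      by (simp only: mult.assoc[symmetric] inv mult_1_left)
    also have "\<dots> = w ^ (n - j) * w ^ k"
      using jk(1) by (simp only: power_add[symmetric] le_add_diff_inverse)
    also have "\<dots> = 1" using jk(2) inv by simp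
    finally have "n dvd k - j" using w by (simp add: primitive_root_of_unity_def)
    then show "j = k" using jk by (auto dest: dvd_imp_le)
  qed
  assume "w ^ j = w ^ k"
  then show "j = k" using inj[of j k] inj[of k j] assms by (cases "j \<le> k") auto
qed simp

lemma primitive_root_of_unity_inverse:
  fixes w :: "'a::comm_monoid_mult"
  assumes "primitive_root_of_unity n w" and "w * v = 1"
  shows "primitive_root_of_unity n v"
proof -
  have "v ^ d = 1 \<longleftrightarrow> w ^ d = 1" for d
    by (metis \<open>w * v = 1\<close> mult.commute mult_1_right power_mult_distrib power_one)
  then show ?thesis using assms(1) by (simp add: primitive_root_of_unity_def)
qed

lemma primitive_root_of_unity_fps_const_iff [simp]:
  "primitive_root_of_unity n (fps_const c) \<longleftrightarrow> primitive_root_of_unity n c"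
  by (simp add: primitive_root_of_unity_def)

lemma sum_powers_root_of_unity:
  fixes z :: "'a::idom"
  assumes "z ^ n = 1" and "z \<noteq> 1"
  shows "(\<Sum>q<n. z ^ q) = 0"
  using one_diff_power_eq[of z n] assms by simp

lemma sum_powers_primitive_root_of_unity:
  fixes w :: "'a::idom"
  assumes w: "primitive_root_of_unity n w" and wv: "w * v = 1" and "j < n" "k < n"
  shows "(\<Sum>q<n. (w ^ j * v ^ k) ^ q) = (if j = k then of_nat n else 0)"
proof (cases "j = k")
  case True
  then show ?thesis using wv by (simp flip: power_mult_distrib)
next
  case False
  have "w ^ n = 1" "v ^ n = 1"
    using w primitive_root_of_unity_inverse[OF w wv] by (simp_all add: primitive_root_of_unity_def)
  then have "(w ^ j * v ^ k) ^ n = 1"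
    by (simp add: power_mult_distrib flip: power_mult) (simp add: mult.commute[of _ n] power_mult)
  moreover have "w ^ j * v ^ k \<noteq> 1"
  proof
    assume "w ^ j * v ^ k = 1"
    then have "w ^ j = w ^ k"
      by (metis wv mult.assoc mult.commute mult_1_right power_mult_distrib power_one)
    then show False using False primitive_root_of_unity_power_eq_iff[OF w] assms by blast
  qed
  ultimately show ?thesis using False by (simp add: sum_powers_root_of_unity)
qed

definition dft :: "nat \<Rightarrow> 'a::comm_semiring_1 \<Rightarrow> (nat \<Rightarrow> 'a) \<Rightarrow> nat \<Rightarrow> 'a" where
  "dft n w a q = (\<Sum>k<n. a k * w ^ (k * q))"

lemma dft_cong: "(\<And>k. k < n \<Longrightarrow> a k = b k) \<Longrightarrow> dft n w a q = dft n w b q"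
  by (simp add: dft_def)

lemma dft_dft:
  fixes w :: "'a::idom"
  assumes w: "primitive_root_of_unity n w" and wv: "w * v = 1" and "k < n"
  shows "dft n v (dft n w a) k = of_nat n * a k"
proof -
  have "dft n v (dft n w a) k = (\<Sum>j<n. a j * (\<Sum>q<n. (w ^ j * v ^ k) ^ q))"
    unfolding dft_def sum_distrib_right sum_distrib_left
    by (subst sum.swap) (simp add: power_mult_distrib mult_ac flip: power_mult)
  also have "\<dots> = of_nat n * a k"
    using \<open>k < n\<close> by (simp add: sum_powers_primitive_root_of_unity[OF w wv] if_distrib cong: if_cong)
  finally show ?thesis .
qed

lemma dft_eq_imp_eq:
  fixes w :: "'a::idom"
  assumes "primitive_root_of_unity n w" and "w * v = 1" and "of_nat n \<noteq> (0::'a)"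
    and "\<And>q. q < n \<Longrightarrow> dft n w a q = dft n w b q" and "k < n"
  shows "a k = b k"
proof -
  have "dft n v (dft n w a) k = dft n v (dft n w b) k"
    using assms(4) by (rule dft_cong)
  then show ?thesis using assms by (simp add: dft_dft)
qed

lemma dft_inverse:
  fixes w :: "'a::idom"
  assumes "primitive_root_of_unity n w" and "w * v = 1" and "c * of_nat n = 1" and "q < n"
  shows "dft n w (\<lambda>k. c * dft n v F k) q = F q"
proof -
  have "primitive_root_of_unity n v" using assms(1,2) by (rule primitive_root_of_unity_inverse)
  then have "dft n w (dft n v F) q = of_nat n * F q"
    using assms(2,4) by (intro dft_dft) (simp_all add: mult.commute)
  then show ?thesis
    using assms(3) by (simp add: dft_def mult.assoc flip: sum_distrib_left)
qed

lemma xi_cis: "xi n = cis (2 * pi / real n)"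
  by (simp add: xi_def cis_conv_exp mult_ac)

lemma cis_eq_1_iff: "cis t = 1 \<longleftrightarrow> (\<exists>m::int. t = of_int m * 2 * pi)"
proof
  assume "cis t = 1"
  then have "cos t = 1" by (simp add: complex_eq_iff)
  then show "\<exists>m::int. t = of_int m * 2 * pi" using cos_one_2pi_int by blast
next
  assume "\<exists>m::int. t = of_int m * 2 * pi"
  then obtain m :: int where "t = 2 * pi * of_int m" by (auto simp: mult_ac)
  then show "cis t = 1" by simp
qed

lemma primitive_root_of_unity_xi:
  assumes "0 < n"
  shows "primitive_root_of_unity n (xi n)"
  unfolding primitive_root_of_unity_def
proof
  fix d
  have "xi n ^ d = 1 \<longleftrightarrow> (\<exists>m::int. real d * (2 * pi / real n) = of_int m * 2 * pi)"
    by (simp add: xi_cis DeMoivre cis_eq_1_iff)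
  also have "\<dots> \<longleftrightarrow> (\<exists>m::int. real d = of_int m * real n)"
    using assms by (auto simp: field_simps)
  also have "\<dots> \<longleftrightarrow> (\<exists>m::int. int d = m * int n)"
    by (subst of_int_eq_iff[where 'a=real, symmetric]) simp
  also have "\<dots> \<longleftrightarrow> int n dvd int d" by (auto simp: dvd_def mult.commute)
  also have "\<dots> \<longleftrightarrow> n dvd d" by (rule int_dvd_int_iff)
  finally show "xi n ^ d = 1 \<longleftrightarrow> n dvd d" .
qed

lemma xi_mult_cnj: "xi n * cnj (xi n) = 1"
  by (simp add: xi_cis cis_cnj cis_mult)

lemma primitive_root_of_unity_cnj_xi: "0 < n \<Longrightarrow> primitive_root_of_unity n (cnj (xi n))"
  using primitive_root_of_unity_inverse[OF primitive_root_of_unity_xi xi_mult_cnj] .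

lemma cnj_xi_power:
  assumes "0 < n" and "k \<le> n"
  shows "cnj (xi n) ^ (n - k) = xi n ^ k"
proof -
  have "xi n ^ n = 1"
    using primitive_root_of_unity_xi[OF assms(1)] by (simp add: primitive_root_of_unity_def)
  have "xi n ^ k = xi n ^ k * (xi n * cnj (xi n)) ^ (n - k)" by (simp add: xi_mult_cnj)
  also have "\<dots> = xi n ^ n * cnj (xi n) ^ (n - k)"
    using assms(2) by (simp add: power_mult_distrib mult.assoc[symmetric] flip: power_add)
  finally show ?thesis using \<open>xi n ^ n = 1\<close> by simp
qed

lemma O_set_nth_eq_0: "f \<in> O_set n \<Longrightarrow> \<not> n dvd k \<Longrightarrow> f $ k = 0"
  by (simp add: O_set_def)

lemma O_set_zero [simp]: "0 \<in> O_set n"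
  by (simp add: O_set_def)

lemma O_set_one [simp]: "1 \<in> O_set n"
  by (simp add: O_set_def)

lemma O_set_fps_const [simp]: "fps_const r \<in> O_set n"
  by (simp add: O_set_def)

lemma O_set_add: "f \<in> O_set n \<Longrightarrow> g \<in> O_set n \<Longrightarrow> f + g \<in> O_set n"
  by (simp add: O_set_def)

lemma O_set_sum: "(\<And>a. a \<in> A \<Longrightarrow> f a \<in> O_set n) \<Longrightarrow> sum f A \<in> O_set n"
  by (simp add: O_set_def fps_sum_nth)

lemma O_set_mult:
  assumes "f \<in> O_set n" and "g \<in> O_set n"
  shows "f * g \<in> O_set n"
  unfolding O_set_def
proof (intro CollectI allI impI)
  fix k assume k: "\<not> n dvd k"
  have "f $ i * g $ (k - i) = 0" if "i \<in> {0..k}" for i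
  proof (cases "n dvd i")
    case True
    then have "\<not> n dvd (k - i)" using k that by (metis atLeastAtMost_iff dvd_add le_add_diff_inverse)
    then show ?thesis using assms(2) by (simp add: O_set_nth_eq_0)
  next
    case False
    then show ?thesis using assms(1) by (simp add: O_set_nth_eq_0)
  qed
  then show "(f * g) $ k = 0" unfolding fps_mult_nth by (intro sum.neutral) blast
qed

lemma O_set_fps_X_power_mult_iff:
  assumes "0 < n" and "f \<in> O_set n"
  shows "(\<exists>g \<in> O_set n. f = fps_X ^ n * g) \<longleftrightarrow> f $ 0 = 0"
proof
  assume "\<exists>g \<in> O_set n. f = fps_X ^ n * g"
  then show "f $ 0 = 0" using assms(1) by (auto simp: fps_X_power_mult_nth)
next
  assume f0: "f $ 0 = 0"
  have "f $ k = 0" if "k < n" for k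
    using that f0 assms(2) nat_dvd_not_less[of k n] by (cases "k = 0") (auto simp: O_set_nth_eq_0)
  then have "f = fps_X ^ n * fps_shift n f"
    by (intro fps_ext) (simp add: fps_X_power_mult_nth)
  moreover have "fps_shift n f \<in> O_set n"
    using assms(2) by (auto simp: O_set_def)
  ultimately show "\<exists>g \<in> O_set n. f = fps_X ^ n * g" by blast
qed

definition fps_of_real :: "real fps \<Rightarrow> complex fps" where
  "fps_of_real f = Abs_fps (\<lambda>m. of_real (f $ m))"

lemma fps_of_real_nth [simp]: "fps_of_real f $ m = of_real (f $ m)"
  by (simp add: fps_of_real_def)

lemma fps_of_real_0 [simp]: "fps_of_real 0 = 0"
  by (rule fps_ext) simp

lemma fps_of_real_1 [simp]: "fps_of_real 1 = 1"
  by (rule fps_ext) simp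

lemma fps_of_real_mult: "fps_of_real (a * b) = fps_of_real a * fps_of_real b"
  by (rule fps_ext) (simp add: fps_mult_nth)

lemma fps_of_real_fps_const: "fps_of_real (fps_const r) = fps_const (of_real r)"
  by (rule fps_ext) simp

lemma phi_sigma_phi_sigma [simp]: "phi_sigma (phi_sigma b) = b"
  by (rule fps_ext) (simp add: phi_sigma_def)

lemma phi_sigma_mult: "phi_sigma (a * b) = phi_sigma a * phi_sigma b"
  by (rule fps_ext) (simp add: phi_sigma_def fps_mult_nth)

lemma phi_rho_funpow_nth: "(phi_rho n ^^ k) b $ m = xi n ^ (k * m) * b $ m"
  by (induction k) (simp_all add: phi_rho_def power_add mult_ac)

lemma phi_rho_funpow_mult: "(phi_rho n ^^ k) (a * b) = (phi_rho n ^^ k) a * (phi_rho n ^^ k) b"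
proof (rule fps_ext)
  fix m
  have "xi n ^ (k * m) * (a $ i * b $ (m - i))
      = (xi n ^ (k * i) * a $ i) * (xi n ^ (k * (m - i)) * b $ (m - i))" if "i \<in> {0..m}" for i
  proof -
    have "k * m = k * i + k * (m - i)" using that by (simp add: diff_mult_distrib2)
    then show ?thesis by (simp add: power_add mult_ac)
  qed
  then show "(phi_rho n ^^ k) (a * b) $ m = ((phi_rho n ^^ k) a * (phi_rho n ^^ k) b) $ m"
    unfolding phi_rho_funpow_nth fps_mult_nth sum_distrib_left by (rule sum.cong[OF refl])
qed

lemma phi_rho_funpow_mod:
  assumes "0 < n"
  shows "phi_rho n ^^ (k mod n) = phi_rho n ^^ k"
proof (intro ext fps_ext)
  fix b m
  note power_mod = primitive_root_of_unity_power_mod[OF primitive_root_of_unity_xi[OF assms]]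
  have "xi n ^ (k mod n * m) = xi n ^ (k mod n * m mod n)" by (rule power_mod[symmetric])
  also have "\<dots> = xi n ^ (k * m)" by (simp only: mod_mult_left_eq power_mod)
  finally show "(phi_rho n ^^ (k mod n)) b $ m = (phi_rho n ^^ k) b $ m"
    by (simp add: phi_rho_funpow_nth)
qed

lemma phi_rho_funpow_phi_sigma:
  assumes "0 < n" and "k \<le> n"
  shows "(phi_rho n ^^ k) (phi_sigma b) = phi_sigma ((phi_rho n ^^ (n - k)) b)"
  by (rule fps_ext)
    (simp add: phi_rho_funpow_nth phi_sigma_def power_mult cnj_xi_power[OF assms])

lemma dihedral_action_nth:
  "dihedral_action n (s, k) b $ m =
     (if s then cnj (xi n ^ (k * m) * b $ m) else xi n ^ (k * m) * b $ m)"
  by (simp add: dihedral_action_def phi_sigma_def phi_rho_funpow_nth)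

lemma dihedral_action_sum: "dihedral_action n g (sum f A) = (\<Sum>a\<in>A. dihedral_action n g (f a))"
  by (cases g) (rule fps_ext, simp add: dihedral_action_nth fps_sum_nth sum_distrib_left)

lemma dihedral_action_mult:
  "dihedral_action n g (a * b) = dihedral_action n g a * dihedral_action n g b"
  by (simp add: dihedral_action_def phi_sigma_mult phi_rho_funpow_mult)

lemma dihedral_action_fps_const_X_power:
  "dihedral_action n (s, k) (fps_const c * fps_X ^ q) =
     fps_const (if s then cnj (xi n ^ (k * q) * c) else xi n ^ (k * q) * c) * fps_X ^ q"
  by (rule fps_ext) (simp add: dihedral_action_nth fps_X_power_nth)

lemma dihedral_action_compose:
  assumes "0 < n" and "f \<in> carrier (dihedral n)"
  shows "dihedral_action n (f \<otimes>\<^bsub>dihedral n\<^esub> g) = dihedral_action n f \<circ> dihedral_action n g"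
proof -
  obtain s1 k1 s2 k2 where fg: "f = (s1, k1)" "g = (s2, k2)" and "k1 < n"
    using assms(2) by (cases f, cases g) (auto simp: dihedral_def)
  have rho_split: "phi_rho n ^^ (n + k2 - k1) = phi_rho n ^^ (n - k1) \<circ> phi_rho n ^^ k2"
    using \<open>k1 < n\<close> by (simp flip: funpow_add)
  show ?thesis
  proof (rule ext)
    fix b
    show "dihedral_action n (f \<otimes>\<^bsub>dihedral n\<^esub> g) b = (dihedral_action n f \<circ> dihedral_action n g) b"
      using fg assms(1) \<open>k1 < n\<close>
      by (cases s1; cases s2) (simp_all add: dihedral_action_def dihedral_def
          phi_rho_funpow_mod funpow_add rho_split phi_rho_funpow_phi_sigma)
  qed
qed

lemma dihedral_action_fps_of_real:
  assumes "0 < n" and "c \<in> O_set n"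
  shows "dihedral_action n g (fps_of_real c) = fps_of_real c"
proof (cases g, intro fps_ext)
  fix s k m
  assume g: "g = (s, k)"
  have "xi n ^ (k * m) = 1" if "n dvd m"
    using that primitive_root_of_unity_xi[OF assms(1)] by (simp add: primitive_root_of_unity_def)
  moreover have "c $ m = 0" if "\<not> n dvd m" using that assms(2) by (simp add: O_set_def)
  ultimately show "dihedral_action n g (fps_of_real c) $ m = fps_of_real c $ m"
    using g by (cases "n dvd m") (simp_all add: dihedral_action_nth)
qed

section \<open>\<open>\<complex>[[z]]\<close> as a free \<open>O\<close>-module\<close>

definition rbasis :: "nat \<Rightarrow> complex" where
  "rbasis i = (if i = 0 then 1 else \<i>)"

definition O_basis :: "nat \<Rightarrow> nat \<Rightarrow> complex fps" where
  "O_basis i p = fps_const (rbasis i) * fps_X ^ p"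

definition O_combination :: "nat \<Rightarrow> (nat \<Rightarrow> nat \<Rightarrow> real fps) \<Rightarrow> complex fps" where
  "O_combination n c = (\<Sum>i<2. \<Sum>p<n. O_basis i p * fps_of_real (c i p))"

text \<open>Every \<open>x \<in> \<complex>[[z]]\<close> is uniquely \<open>\<Sum> \<i>\<^sup>i z\<^sup>p c\<^sub>i\<^sub>p\<close> (\<open>i < 2\<close>, \<open>p < n\<close>) with
  \<open>c\<^sub>i\<^sub>p \<in> O\<close>: the coefficient of \<open>z\<^sup>m\<close> in \<open>c\<^sub>i\<^sub>p\<close> is the real (\<open>i = 0\<close>) or
  imaginary part of the coefficient of \<open>z\<^sup>p\<^sup>+\<^sup>m\<close> in \<open>x\<close>.\<close>
definition O_coord :: "nat \<Rightarrow> complex fps \<Rightarrow> nat \<Rightarrow> nat \<Rightarrow> real fps" where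
  "O_coord n x i p = Abs_fps (\<lambda>m. if n dvd m then (if i = 0 then Re else Im) (x $ (p + m)) else 0)"

lemma O_coord_in_O_set: "O_coord n x i p \<in> O_set n"
  by (simp add: O_coord_def O_set_def)

lemma O_coord_add: "O_coord n (x + y) i p = O_coord n x i p + O_coord n y i p"
  by (rule fps_ext) (simp add: O_coord_def)

lemma O_coord_sum: "O_coord n (sum f A) i p = (\<Sum>a\<in>A. O_coord n (f a) i p)"
  by (rule fps_ext) (simp add: O_coord_def fps_sum_nth)

lemma O_combination_nth:
  assumes "0 < n" and c: "\<And>i p. c i p \<in> O_set n"
  shows "O_combination n c $ m =
    Complex (c 0 (m mod n) $ (m - m mod n)) (c 1 (m mod n) $ (m - m mod n))"
proof -
  have term_nth: "(O_basis i p * fps_of_real (c i p)) $ m =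
      (if p = m mod n then rbasis i * of_real (c i p $ (m - m mod n)) else 0)" if "p < n" for i p
  proof (cases "m < p")
    case True
    then show ?thesis using that by (auto simp: O_basis_def fps_X_power_mult_nth mult.assoc)
  next
    case False
    then have "n dvd m - p \<longleftrightarrow> p = m mod n" using that by (auto simp: mod_eq_dvd_iff_nat[symmetric])
    then show ?thesis
      using False c[of i p] by (auto simp: O_basis_def fps_X_power_mult_nth mult.assoc O_set_nth_eq_0)
  qed
  have "O_combination n c $ m = (\<Sum>i<2. rbasis i * of_real (c i (m mod n) $ (m - m mod n)))"
    using assms(1) by (simp add: O_combination_def fps_sum_nth term_nth)
  then show ?thesis by (simp add: numeral_2_eq_2 rbasis_def Complex_eq)
qed

lemma O_combination_O_coord:
  assumes "0 < n"
  shows "O_combination n (O_coord n x) = x"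
proof (rule fps_ext)
  fix m
  have "n dvd m - m mod n" by (simp add: minus_mod_eq_mult_div)
  then show "O_combination n (O_coord n x) $ m = x $ m"
    using assms by (simp add: O_combination_nth O_coord_in_O_set) (simp add: O_coord_def)
qed

lemma O_coord_O_combination:
  assumes "0 < n" and c: "\<And>i p. c i p \<in> O_set n" and "i < 2" and "p < n"
  shows "O_coord n (O_combination n c) i p = c i p"
proof (rule fps_ext)
  fix m
  show "O_coord n (O_combination n c) i p $ m = c i p $ m"
  proof (cases "n dvd m")
    case True
    then have "(p + m) mod n = p" "p + m - (p + m) mod n = m" using \<open>p < n\<close> by auto
    then show ?thesis
      using True assms by (auto simp: O_coord_def O_combination_nth less_2_cases_iff)
  next
    case False
    then show ?thesis by (simp add: O_coord_def O_set_nth_eq_0[OF c])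
  qed
qed

lemma O_coord_mult:
  assumes "0 < n" and c: "c \<in> O_set n" and "i < 2" and "p < n"
  shows "O_coord n (x * fps_of_real c) i p = O_coord n x i p * c"
proof -
  have "x * fps_of_real c = O_combination n (O_coord n x) * fps_of_real c"
    using assms(1) by (simp add: O_combination_O_coord)
  also have "\<dots> = O_combination n (\<lambda>i p. O_coord n x i p * c)"
    by (simp add: O_combination_def sum_distrib_right fps_of_real_mult mult.assoc)
  finally show ?thesis
    using assms by (simp add: O_coord_O_combination O_set_mult c O_coord_in_O_set)
qed

lemma O_combination_indicator:
  assumes "j < 2" and "q < n"
  shows "O_combination n (\<lambda>i p. if i = j \<and> p = q then 1 else 0) = O_basis j q"
proof -
  have "O_combination n (\<lambda>i p. if i = j \<and> p = q then 1 else 0) =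
      (\<Sum>i<2. \<Sum>p<n. if i = j \<and> p = q then O_basis i p else 0)"
    unfolding O_combination_def by (intro sum.cong refl) simp
  also have "\<dots> = (\<Sum>i<2. if i = j then O_basis i q else 0)"
    using assms by (intro sum.cong refl) (cases "i = j"; simp)
  finally show ?thesis using assms by simp
qed

lemma O_coord_O_basis:
  assumes "0 < n" and "i < 2" and "j < 2" and "p < n" and "q < n"
  shows "O_coord n (O_basis j q) i p = (if i = j \<and> p = q then 1 else 0)"
proof -
  have "O_coord n (O_combination n (\<lambda>i p. if i = j \<and> p = q then 1 else 0)) i p =
      (if i = j \<and> p = q then 1 else 0)"
    by (rule O_coord_O_combination) (simp_all add: assms)
  then show ?thesis using assms by (simp add: O_combination_indicator)
qed

lemma rbasis_combination_eq_iff: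
  fixes P Q :: "complex fps" and Y :: "nat \<Rightarrow> complex fps"
  shows "(\<forall>j<2. P * fps_const (rbasis j) + Q * fps_const (cnj (rbasis j)) = Y j) \<longleftrightarrow>
    P = fps_const (1/2) * (Y 0 - fps_const \<i> * Y 1) \<and> Q = fps_const (1/2) * (Y 0 + fps_const \<i> * Y 1)"
proof -
  have "(\<forall>j<2. P * fps_const (rbasis j) + Q * fps_const (cnj (rbasis j)) = Y j) \<longleftrightarrow>
      Y 0 = P + Q \<and> Y 1 = fps_const \<i> * (P - Q)"
    by (auto simp: less_2_cases_iff rbasis_def algebra_simps simp flip: fps_const_neg)
  also have "\<dots> \<longleftrightarrow>
      P = fps_const (1/2) * (Y 0 - fps_const \<i> * Y 1) \<and> Q = fps_const (1/2) * (Y 0 + fps_const \<i> * Y 1)"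
  proof
    assume "Y 0 = P + Q \<and> Y 1 = fps_const \<i> * (P - Q)"
    then have "Y 0 = P + Q" and "Y 1 = fps_const \<i> * (P - Q)" by simp_all
    then show "P = fps_const (1/2) * (Y 0 - fps_const \<i> * Y 1) \<and> Q = fps_const (1/2) * (Y 0 + fps_const \<i> * Y 1)"
      by (simp only:) (simp add: fps_eq_iff field_simps)
  next
    assume "P = fps_const (1/2) * (Y 0 - fps_const \<i> * Y 1) \<and> Q = fps_const (1/2) * (Y 0 + fps_const \<i> * Y 1)"
    then have "P = fps_const (1/2) * (Y 0 - fps_const \<i> * Y 1)"
      and "Q = fps_const (1/2) * (Y 0 + fps_const \<i> * Y 1)" by simp_all
    then show "Y 0 = P + Q \<and> Y 1 = fps_const \<i> * (P - Q)"
      by (simp only:) (simp add: fps_eq_iff field_simps fps_numeral_fps_const)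
  qed
  finally show ?thesis .
qed

lemma rbasis_combination_unique:
  fixes P Q P' Q' :: "complex fps"
  assumes "\<forall>j<2. P * fps_const (rbasis j) + Q * fps_const (cnj (rbasis j)) =
    P' * fps_const (rbasis j) + Q' * fps_const (cnj (rbasis j))"
  shows "P = P' \<and> Q = Q'"
proof -
  let ?Y = "\<lambda>j. P' * fps_const (rbasis j) + Q' * fps_const (cnj (rbasis j))"
  let ?P = "fps_const (1/2) * (?Y 0 - fps_const \<i> * ?Y 1)"
    and ?Q = "fps_const (1/2) * (?Y 0 + fps_const \<i> * ?Y 1)"
  have "P = ?P \<and> Q = ?Q" using assms rbasis_combination_eq_iff[of P Q ?Y] by blast
  moreover have "P' = ?P \<and> Q' = ?Q" using rbasis_combination_eq_iff[of P' Q' ?Y] by blast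
  ultimately show ?thesis by metis
qed

section \<open>The skew group ring acting on \<open>\<complex>[[z]]\<close>\<close>

lemma finsum_eq_sum:
  fixes R (structure)
  assumes R: "abelian_monoid R" and add: "\<And>x y. x \<oplus> y = x + y" and zero: "\<zero> = 0"
    and "finite A" and "f ` A \<subseteq> carrier R"
  shows "finsum R f A = sum f A"
  using assms(4,5)
proof (induction A rule: finite_induct)
  case empty
  then show ?case using abelian_monoid.finsum_empty[OF R] zero by simp
next
  case (insert a A)
  then have "finsum R f (insert a A) = f a \<oplus> finsum R f A"
    by (intro abelian_monoid.finsum_insert[OF R]) auto
  then show ?case using insert add by simp
qed

lemma fps_ring_simps [simp]:
  "x \<oplus>\<^bsub>fps_ring\<^esub> y = x + y" "x \<otimes>\<^bsub>fps_ring\<^esub> y = x * y"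
  "\<zero>\<^bsub>fps_ring\<^esub> = 0" "\<one>\<^bsub>fps_ring\<^esub> = 1" "carrier fps_ring = UNIV"
  by (simp_all add: fps_ring_def)

lemma finsum_fps_ring: "finite A \<Longrightarrow> finsum (fps_ring :: 'a::comm_ring_1 fps ring) f A = sum f A"
  by (rule finsum_eq_sum) (auto intro: abelian_monoidI simp: add.assoc add.commute)

lemma carrier_dihedral [simp]: "carrier (dihedral n) = UNIV \<times> {..<n}"
  by (simp add: dihedral_def)

lemma skew_ring_Dn_carrier:
  "carrier (skew_ring_Dn n) = {u. \<forall>g. g \<notin> carrier (dihedral n) \<longrightarrow> u g = 0}"
  by (simp add: skew_ring_Dn_def skew_group_ring_def)

lemma skew_ring_Dn_add:
  "u \<oplus>\<^bsub>skew_ring_Dn n\<^esub> v = (\<lambda>g. if g \<in> carrier (dihedral n) then u g + v g else 0)"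
  by (rule ext) (simp add: skew_ring_Dn_def skew_group_ring_def)

lemma skew_ring_Dn_one: "\<one>\<^bsub>skew_ring_Dn n\<^esub> = (\<lambda>g. if g = \<one>\<^bsub>dihedral n\<^esub> then 1 else 0)"
  by (rule ext) (simp add: skew_ring_Dn_def skew_group_ring_def)

lemma skew_ring_Dn_mult:
  assumes "h \<in> carrier (dihedral n)"
  shows "(u \<otimes>\<^bsub>skew_ring_Dn n\<^esub> v) h =
    (\<Sum>f\<in>carrier (dihedral n). \<Sum>g\<in>carrier (dihedral n).
       if f \<otimes>\<^bsub>dihedral n\<^esub> g = h then u f * dihedral_action n f (v g) else 0)"
  using assms
  by (simp add: skew_ring_Dn_def skew_group_ring_def finsum_fps_ring sum.cartesian_product
      cong: if_cong)

lemma sum_dihedral: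
  "(\<Sum>g\<in>carrier (dihedral n). f g) = (\<Sum>k<n. f (False, k)) + (\<Sum>k<n. f (True, k))"
proof -
  have "(\<Sum>g\<in>carrier (dihedral n). f g) = (\<Sum>s\<in>UNIV. \<Sum>k<n. f (s, k))"
    by (simp add: sum.cartesian_product)
  then show ?thesis by (simp add: UNIV_bool add.commute)
qed

definition skew_act :: "nat \<Rightarrow> (bool \<times> nat \<Rightarrow> complex fps) \<Rightarrow> complex fps \<Rightarrow> complex fps" where
  "skew_act n u b = (\<Sum>g\<in>carrier (dihedral n). u g * dihedral_action n g b)"

lemma skew_act_add: "skew_act n (u \<oplus>\<^bsub>skew_ring_Dn n\<^esub> v) b = skew_act n u b + skew_act n v b"
  by (simp add: skew_act_def skew_ring_Dn_add distrib_right sum.distrib del: carrier_dihedral)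

lemma skew_act_one: "0 < n \<Longrightarrow> skew_act n \<one>\<^bsub>skew_ring_Dn n\<^esub> b = b"
  by (simp add: skew_act_def skew_ring_Dn_one dihedral_def dihedral_action_def
      if_distrib[of "\<lambda>x. x * _"] cong: if_cong)

lemma skew_act_scale: "skew_act n (skew_scale r u) b = skew_act n u b * fps_of_real (fps_const r)"
  unfolding skew_act_def skew_scale_def fps_of_real_fps_const sum_distrib_right
  by (intro sum.cong refl) (simp add: mult_ac)

lemma skew_act_sum_right: "skew_act n u (sum f A) = (\<Sum>a\<in>A. skew_act n u (f a))"
  unfolding skew_act_def dihedral_action_sum sum_distrib_left by (rule sum.swap)

lemma skew_act_O_linear:
  assumes "0 < n" and "c \<in> O_set n"
  shows "skew_act n u (b * fps_of_real c) = skew_act n u b * fps_of_real c"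
  using assms by (simp add: skew_act_def dihedral_action_mult dihedral_action_fps_of_real
      sum_distrib_right mult.assoc)

lemma skew_act_mult:
  assumes "0 < n"
  shows "skew_act n (u \<otimes>\<^bsub>skew_ring_Dn n\<^esub> v) b = skew_act n u (skew_act n v b)"
proof -
  let ?C = "carrier (dihedral n)" and ?a = "dihedral_action n"
  have mult_closed: "f \<otimes>\<^bsub>dihedral n\<^esub> g \<in> ?C" if "f \<in> ?C" "g \<in> ?C" for f g
    using that assms by (auto simp: dihedral_def split: prod.splits)
  have "finite ?C" by simp
  have "skew_act n (u \<otimes>\<^bsub>skew_ring_Dn n\<^esub> v) b =
      (\<Sum>h\<in>?C. \<Sum>f\<in>?C. \<Sum>g\<in>?C. if f \<otimes>\<^bsub>dihedral n\<^esub> g = h then u f * ?a f (v g) * ?a h b else 0)"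
    unfolding skew_act_def
    by (intro sum.cong refl) (simp add: skew_ring_Dn_mult sum_distrib_right if_distrib[of "\<lambda>x. x * _"]
        del: carrier_dihedral cong: if_cong)
  also have "\<dots> = (\<Sum>f\<in>?C. \<Sum>h\<in>?C. \<Sum>g\<in>?C. if f \<otimes>\<^bsub>dihedral n\<^esub> g = h then u f * ?a f (v g) * ?a h b else 0)"
    by (rule sum.swap)
  also have "\<dots> = (\<Sum>f\<in>?C. \<Sum>g\<in>?C. \<Sum>h\<in>?C. if f \<otimes>\<^bsub>dihedral n\<^esub> g = h then u f * ?a f (v g) * ?a h b else 0)"
    by (rule sum.cong[OF refl], rule sum.swap)
  also have "\<dots> = (\<Sum>f\<in>?C. \<Sum>g\<in>?C. u f * ?a f (v g) * ?a (f \<otimes>\<^bsub>dihedral n\<^esub> g) b)"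
    using \<open>finite ?C\<close> by (intro sum.cong refl) (simp add: mult_closed del: carrier_dihedral)
  also have "\<dots> = skew_act n u (skew_act n v b)"
    unfolding skew_act_def
    by (intro sum.cong refl)
      (simp add: dihedral_action_compose[OF assms] dihedral_action_sum dihedral_action_mult
        sum_distrib_left mult.assoc del: carrier_dihedral)
  finally show ?thesis .
qed

definition dft_rotations :: "nat \<Rightarrow> (bool \<times> nat \<Rightarrow> complex fps) \<Rightarrow> nat \<Rightarrow> complex fps" where
  "dft_rotations n u = dft n (fps_const (xi n)) (\<lambda>k. u (False, k))"

definition dft_reflections :: "nat \<Rightarrow> (bool \<times> nat \<Rightarrow> complex fps) \<Rightarrow> nat \<Rightarrow> complex fps" where
  "dft_reflections n u = dft n (fps_const (cnj (xi n))) (\<lambda>k. u (True, k))"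

lemma skew_act_fps_const_X_power:
  "skew_act n u (fps_const c * fps_X ^ q) =
    (dft_rotations n u q * fps_const c + dft_reflections n u q * fps_const (cnj c)) * fps_X ^ q"
proof -
  have "skew_act n u (fps_const c * fps_X ^ q) =
      (\<Sum>k<n. u (False, k) * (fps_const (xi n ^ (k * q)) * (fps_const c * fps_X ^ q))) +
      (\<Sum>k<n. u (True, k) * (fps_const (cnj (xi n) ^ (k * q)) * (fps_const (cnj c) * fps_X ^ q)))"
    by (simp add: skew_act_def sum_dihedral dihedral_action_fps_const_X_power mult.assoc
        fps_const_mult[symmetric] del: carrier_dihedral fps_const_mult)
  then show ?thesis
    by (simp add: dft_rotations_def dft_reflections_def dft_def sum_distrib_left sum_distrib_right
        distrib_left distrib_right mult_ac del: fps_const_mult)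
qed

section \<open>The ring \<open>M\<^sub>2(H\<^sub>n(O))\<close>\<close>

lemma (in abelian_monoid) finsum_lessThan_2:
  assumes "f 0 \<in> carrier G" and "f 1 \<in> carrier G"
  shows "finsum G f {..<2::nat} = f 0 \<oplus> f 1"
proof -
  have "{..<2::nat} = insert 0 {1}" by auto
  then show ?thesis using assms by (simp add: finsum_insert)
qed

lemma O_ring_simps [simp]:
  "carrier (O_ring n) = O_set n" "x \<oplus>\<^bsub>O_ring n\<^esub> y = x + y" "\<zero>\<^bsub>O_ring n\<^esub> = 0"
  "x \<otimes>\<^bsub>O_ring n\<^esub> y = x * y"
  by (simp_all add: O_ring_def fps_ring_def)

lemma finsum_O_ring: "finite A \<Longrightarrow> f ` A \<subseteq> O_set n \<Longrightarrow> finsum (O_ring n) f A = sum f A"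
proof (rule finsum_eq_sum)
  show "abelian_monoid (O_ring n)"
    by (rule abelian_monoidI) (simp_all add: O_set_add add.assoc add.commute)
qed simp_all

lemma H_ring_carrier_iff:
  assumes "0 < n"
  shows "M \<in> carrier (H_ring n) \<longleftrightarrow>
    (\<forall>p q. M p q \<in> O_set n) \<and> (\<forall>p q. \<not> (p < n \<and> q < n) \<longrightarrow> M p q = 0) \<and>
    (\<forall>p q. p < q \<and> q < n \<longrightarrow> M p q $ 0 = 0)"
  using O_set_fps_X_power_mult_iff[OF assms]
  by (auto simp: H_ring_def mat_ring_def) (metis O_set_zero)

lemma H_ring_zero: "\<zero>\<^bsub>H_ring n\<^esub> = (\<lambda>p q. 0)"
  by (simp add: H_ring_def mat_ring_def)

lemma H_ring_add: "M \<oplus>\<^bsub>H_ring n\<^esub> N = (\<lambda>p q. if p < n \<and> q < n then M p q + N p q else 0)"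
  by (intro ext) (simp add: H_ring_def mat_ring_def)

lemma H_ring_mult:
  assumes "M \<in> carrier (H_ring n)" and "N \<in> carrier (H_ring n)"
  shows "M \<otimes>\<^bsub>H_ring n\<^esub> N = (\<lambda>p q. if p < n \<and> q < n then \<Sum>r<n. M p r * N r q else 0)"
  using assms by (intro ext) (auto simp: H_ring_def mat_ring_def intro!: finsum_O_ring O_set_mult)

lemma H_ring_mult_closed:
  assumes "0 < n" and M: "M \<in> carrier (H_ring n)" and N: "N \<in> carrier (H_ring n)"
  shows "(\<lambda>p q. if p < n \<and> q < n then \<Sum>r<n. M p r * N r q else 0) \<in> carrier (H_ring n)"
  unfolding H_ring_carrier_iff[OF assms(1)]
proof (intro conjI allI impI)
  fix p q
  show "(if p < n \<and> q < n then \<Sum>r<n. M p r * N r q else 0) \<in> O_set n"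
    using M N by (auto simp: H_ring_carrier_iff[OF assms(1)] intro!: O_set_sum O_set_mult)
next
  fix p q assume pq: "p < q \<and> q < n"
  have "M p r $ 0 * N r q $ 0 = 0" if "r < n" for r
    using M N pq that by (cases "r \<le> p") (auto simp: H_ring_carrier_iff[OF assms(1)])
  then have "(\<Sum>r<n. M p r $ 0 * N r q $ 0) = 0" by (meson lessThan_iff sum.neutral)
  then show "(if p < n \<and> q < n then \<Sum>r<n. M p r * N r q else 0) $ 0 = 0"
    using pq by (simp add: fps_sum_nth)
qed auto

lemma abelian_monoid_H_ring:
  assumes "0 < n"
  shows "abelian_monoid (H_ring n)"
  by (rule abelian_monoidI)
    (auto simp: H_ring_carrier_iff[OF assms] H_ring_add H_ring_zero fun_eq_iff add.assoc add.commute
      intro: O_set_add)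

lemma M2H_ring_carrier_iff:
  assumes "0 < n"
  shows "M \<in> carrier (M2H_ring n) \<longleftrightarrow>
    (\<forall>i j p q. M i j p q \<in> O_set n) \<and>
    (\<forall>i j p q. \<not> (i < 2 \<and> j < 2 \<and> p < n \<and> q < n) \<longrightarrow> M i j p q = 0) \<and>
    (\<forall>i j p q. i < 2 \<and> j < 2 \<and> p < q \<and> q < n \<longrightarrow> M i j p q $ 0 = 0)"
proof -
  have "M \<in> carrier (M2H_ring n) \<longleftrightarrow> (\<forall>i j. i < 2 \<and> j < 2 \<longrightarrow> M i j \<in> carrier (H_ring n)) \<and>
      (\<forall>i j p q. \<not> (i < 2 \<and> j < 2) \<longrightarrow> M i j p q = 0)"
    by (auto simp: M2H_ring_def mat_ring_def H_ring_zero fun_eq_iff)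
  then show ?thesis
    unfolding H_ring_carrier_iff[OF assms] by (auto; metis O_set_zero)
qed

lemma M2H_ring_add:
  "(M \<oplus>\<^bsub>M2H_ring n\<^esub> N) i j p q =
     (if i < 2 \<and> j < 2 \<and> p < n \<and> q < n then M i j p q + N i j p q else 0)"
  by (simp add: M2H_ring_def mat_ring_def H_ring_add H_ring_zero)

lemma M2H_ring_one:
  "\<one>\<^bsub>M2H_ring n\<^esub> i j p q = (if i < 2 \<and> j < 2 \<and> p < n \<and> q < n \<and> i = j \<and> p = q then 1 else 0)"
  by (simp add: M2H_ring_def mat_ring_def H_ring_def O_ring_def fps_ring_def)

lemma M2H_ring_mult:
  assumes "0 < n" and "M \<in> carrier (M2H_ring n)" and "N \<in> carrier (M2H_ring n)"
  shows "(M \<otimes>\<^bsub>M2H_ring n\<^esub> N) i j p q =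
    (if i < 2 \<and> j < 2 \<and> p < n \<and> q < n then \<Sum>k<2. \<Sum>r<n. M i k p r * N k j r q else 0)"
proof (cases "i < 2 \<and> j < 2")
  case True
  let ?F = "\<lambda>k. M i k \<otimes>\<^bsub>H_ring n\<^esub> N k j"
  have entries: "M i k \<in> carrier (H_ring n)" "N k j \<in> carrier (H_ring n)" if "k < 2" for k
    using assms(2,3) True that by (auto simp: M2H_ring_def mat_ring_def)
  then have F: "?F k = (\<lambda>p q. if p < n \<and> q < n then \<Sum>r<n. M i k p r * N k j r q else 0)"
    if "k < 2" for k
    using that by (simp add: H_ring_mult)
  have "?F k \<in> carrier (H_ring n)" if "k < 2" for k
    using F[OF that] H_ring_mult_closed[OF assms(1) entries[OF that]] by simp
  then have "(M \<otimes>\<^bsub>M2H_ring n\<^esub> N) i j = ?F 0 \<oplus>\<^bsub>H_ring n\<^esub> ?F 1"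
    using True abelian_monoid.finsum_lessThan_2[OF abelian_monoid_H_ring[OF assms(1)]]
    by (simp add: M2H_ring_def mat_ring_def)
  then show ?thesis using True by (simp add: H_ring_add F numeral_2_eq_2)
next
  case False
  then show ?thesis by (auto simp: M2H_ring_def mat_ring_def H_ring_zero)
qed

text \<open>The matrix of \<open>b \<mapsto> u \<cdot> b\<close> in the \<open>O\<close>-basis \<open>\<i>\<^sup>j z\<^sup>q\<close>, with row \<open>(i, p)\<close> and column \<open>(j, q)\<close>:
  \<open>(i, j)\<close> selects the block of the \<open>2 \<times> 2\<close> block matrix and \<open>(p, q)\<close> the entry inside it.\<close>
definition skew_matrix :: "nat \<Rightarrow> (bool \<times> nat \<Rightarrow> complex fps) \<Rightarrow> nat \<Rightarrow> nat \<Rightarrow> nat \<Rightarrow> nat \<Rightarrow> real fps" where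
  "skew_matrix n u i j p q =
     (if i < 2 \<and> j < 2 \<and> p < n \<and> q < n then O_coord n (skew_act n u (O_basis j q)) i p else 0)"

lemma skew_act_O_basis:
  "skew_act n u (O_basis j q) =
    (dft_rotations n u q * fps_const (rbasis j) + dft_reflections n u q * fps_const (cnj (rbasis j)))
      * fps_X ^ q"
  unfolding O_basis_def by (rule skew_act_fps_const_X_power)

lemma skew_matrix_add: "skew_matrix n (u \<oplus>\<^bsub>skew_ring_Dn n\<^esub> v) = skew_matrix n u \<oplus>\<^bsub>M2H_ring n\<^esub> skew_matrix n v"
  by (intro ext) (simp add: skew_matrix_def M2H_ring_add skew_act_add O_coord_add)

context
  fixes n :: nat
  assumes n_pos: "0 < n"
begin

lemma skew_ring_Dn_eqI:
  assumes "u \<in> carrier (skew_ring_Dn n)" and "v \<in> carrier (skew_ring_Dn n)"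
    and rot: "\<And>q. q < n \<Longrightarrow> dft_rotations n u q = dft_rotations n v q"
    and refl: "\<And>q. q < n \<Longrightarrow> dft_reflections n u q = dft_reflections n v q"
  shows "u = v"
proof
  fix g :: "bool \<times> nat"
  obtain s k where g: "g = (s, k)" by (cases g)
  show "u g = v g"
  proof (cases "k < n")
    case True
    have n_ne_0: "of_nat n \<noteq> (0 :: complex fps)" using n_pos by simp
    have "u (False, k) = v (False, k)"
      using dft_eq_imp_eq[of n "fps_const (xi n)" "fps_const (cnj (xi n))" "\<lambda>k. u (False, k)"
          "\<lambda>k. v (False, k)"] rot True n_ne_0 n_pos
      by (simp add: primitive_root_of_unity_xi xi_mult_cnj dft_rotations_def)
    moreover have "u (True, k) = v (True, k)"
      using dft_eq_imp_eq[of n "fps_const (cnj (xi n))" "fps_const (xi n)" "\<lambda>k. u (True, k)"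
          "\<lambda>k. v (True, k)"] refl True n_ne_0 n_pos
      by (simp add: primitive_root_of_unity_cnj_xi xi_mult_cnj mult.commute dft_reflections_def)
    ultimately show ?thesis using g by (cases s) simp_all
  next
    case False
    then show ?thesis using assms(1,2) g by (simp add: skew_ring_Dn_carrier)
  qed
qed

lemma ex_skew_ring_Dn_dft:
  "\<exists>u \<in> carrier (skew_ring_Dn n). \<forall>q<n. dft_rotations n u q = P q \<and> dft_reflections n u q = Q q"
proof -
  define c :: "complex fps" where "c = fps_const (1 / of_nat n)"
  have c: "c * of_nat n = 1" using n_pos by (simp add: c_def flip: fps_of_nat)
  define u where "u = (\<lambda>(s, k). if k < n then
      (if s then c * dft n (fps_const (xi n)) Q k else c * dft n (fps_const (cnj (xi n))) P k) else 0)"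
  have "u \<in> carrier (skew_ring_Dn n)" by (simp add: skew_ring_Dn_carrier u_def)
  moreover have "dft_rotations n u q = P q" if "q < n" for q
  proof -
    have "dft_rotations n u q = dft n (fps_const (xi n)) (\<lambda>k. c * dft n (fps_const (cnj (xi n))) P k) q"
      unfolding dft_rotations_def by (rule dft_cong) (simp add: u_def)
    also have "\<dots> = P q"
      using n_pos that c by (intro dft_inverse) (simp_all add: primitive_root_of_unity_xi xi_mult_cnj)
    finally show ?thesis .
  qed
  moreover have "dft_reflections n u q = Q q" if "q < n" for q
  proof -
    have "dft_reflections n u q = dft n (fps_const (cnj (xi n))) (\<lambda>k. c * dft n (fps_const (xi n)) Q k) q"
      unfolding dft_reflections_def by (rule dft_cong) (simp add: u_def)
    also have "\<dots> = Q q"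
      using n_pos that c
      by (intro dft_inverse) (simp_all add: primitive_root_of_unity_cnj_xi xi_mult_cnj mult.commute)
    finally show ?thesis .
  qed
  ultimately show ?thesis by blast
qed

lemma skew_act_O_basis_expansion:
  assumes "j < 2" and "q < n"
  shows "skew_act n u (O_basis j q) = O_combination n (\<lambda>i p. skew_matrix n u i j p q)"
proof -
  have "O_combination n (\<lambda>i p. skew_matrix n u i j p q) = O_combination n (O_coord n (skew_act n u (O_basis j q)))"
    using assms by (simp add: O_combination_def skew_matrix_def)
  then show ?thesis by (simp add: O_combination_O_coord[OF n_pos])
qed

lemma skew_matrix_in_carrier: "skew_matrix n u \<in> carrier (M2H_ring n)"
  unfolding M2H_ring_carrier_iff[OF n_pos]
proof (intro conjI allI impI)
  fix i j p q
  show "skew_matrix n u i j p q \<in> O_set n"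
    by (simp add: skew_matrix_def O_coord_in_O_set)
  show "\<not> (i < 2 \<and> j < 2 \<and> p < n \<and> q < n) \<Longrightarrow> skew_matrix n u i j p q = 0"
    by (auto simp: skew_matrix_def)
  txt \<open>\<open>u \<cdot> (c z\<^sup>q)\<close> is divisible by \<open>z\<^sup>q\<close>, so its coordinates of index \<open>p < q\<close> vanish at \<open>z = 0\<close>.\<close>
  show "i < 2 \<and> j < 2 \<and> p < q \<and> q < n \<Longrightarrow> skew_matrix n u i j p q $ 0 = 0"
    by (simp add: skew_matrix_def skew_act_O_basis O_coord_def fps_X_power_mult_right_nth)
qed

lemma skew_matrix_one: "skew_matrix n \<one>\<^bsub>skew_ring_Dn n\<^esub> = \<one>\<^bsub>M2H_ring n\<^esub>"
  by (intro ext) (simp add: skew_matrix_def M2H_ring_one skew_act_one[OF n_pos] O_coord_O_basis[OF n_pos])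

lemma skew_matrix_scale: "skew_matrix n (skew_scale r u) = M2H_scale r (skew_matrix n u)"
  by (intro ext)
    (simp add: skew_matrix_def M2H_scale_def skew_act_scale O_coord_mult[OF n_pos]
      mult.commute[of _ "fps_const r"])

lemma skew_matrix_mult:
  "skew_matrix n (u \<otimes>\<^bsub>skew_ring_Dn n\<^esub> v) = skew_matrix n u \<otimes>\<^bsub>M2H_ring n\<^esub> skew_matrix n v"
proof (intro ext)
  fix i j p q
  show "skew_matrix n (u \<otimes>\<^bsub>skew_ring_Dn n\<^esub> v) i j p q = (skew_matrix n u \<otimes>\<^bsub>M2H_ring n\<^esub> skew_matrix n v) i j p q"
  proof (cases "i < 2 \<and> j < 2 \<and> p < n \<and> q < n")
    case True
    have "skew_matrix n (u \<otimes>\<^bsub>skew_ring_Dn n\<^esub> v) i j p q = O_coord n (skew_act n u (skew_act n v (O_basis j q))) i p"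
      using True by (simp add: skew_matrix_def skew_act_mult[OF n_pos])
    also have "\<dots> = O_coord n (\<Sum>k<2. \<Sum>r<n. skew_act n u (O_basis k r) * fps_of_real (skew_matrix n v k j r q)) i p"
      using True skew_matrix_in_carrier[unfolded M2H_ring_carrier_iff[OF n_pos]]
      by (simp add: skew_act_O_basis_expansion O_combination_def skew_act_sum_right
          skew_act_O_linear[OF n_pos])
    also have "\<dots> = (\<Sum>k<2. \<Sum>r<n. skew_matrix n u i k p r * skew_matrix n v k j r q)"
      using True by (simp add: O_coord_sum O_coord_mult[OF n_pos] O_coord_in_O_set skew_matrix_def)
    finally show ?thesis
      using True by (simp add: M2H_ring_mult[OF n_pos] skew_matrix_in_carrier)
  next
    case False
    then show ?thesis by (auto simp: skew_matrix_def M2H_ring_mult[OF n_pos] skew_matrix_in_carrier)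
  qed
qed

lemma skew_matrix_inj:
  assumes "u \<in> carrier (skew_ring_Dn n)" and "v \<in> carrier (skew_ring_Dn n)"
    and eq: "skew_matrix n u = skew_matrix n v"
  shows "u = v"
proof -
  have "dft_rotations n u q = dft_rotations n v q \<and> dft_reflections n u q = dft_reflections n v q"
    if "q < n" for q
  proof (rule rbasis_combination_unique, intro allI impI)
    fix j :: nat assume "j < 2"
    then have "skew_act n u (O_basis j q) = skew_act n v (O_basis j q)"
      using \<open>q < n\<close> eq by (simp add: skew_act_O_basis_expansion)
    then show "dft_rotations n u q * fps_const (rbasis j) + dft_reflections n u q * fps_const (cnj (rbasis j)) =
        dft_rotations n v q * fps_const (rbasis j) + dft_reflections n v q * fps_const (cnj (rbasis j))"
      by (simp add: skew_act_O_basis)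
  qed
  then show ?thesis using assms(1,2) by (intro skew_ring_Dn_eqI) simp_all
qed

lemma fps_shift_M2H_column_times_fps_X_power:
  assumes "M \<in> carrier (M2H_ring n)" and "j < 2" and "q < n"
  shows "fps_shift q (O_combination n (\<lambda>i p. M i j p q)) * fps_X ^ q = O_combination n (\<lambda>i p. M i j p q)"
proof -
  have "O_combination n (\<lambda>i p. M i j p q) $ m = 0" if "m < q" for m
    using that assms M2H_ring_carrier_iff[OF n_pos, of M]
    by (simp add: O_combination_nth[OF n_pos] Complex_eq_0)
  then show ?thesis by (intro fps_ext) (simp add: fps_X_power_mult_right_nth)
qed

lemma skew_matrix_surj:
  assumes M: "M \<in> carrier (M2H_ring n)"
  shows "\<exists>u \<in> carrier (skew_ring_Dn n). skew_matrix n u = M"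
proof -
  define Y where "Y j q = fps_shift q (O_combination n (\<lambda>i p. M i j p q))" for j q
  note Y = fps_shift_M2H_column_times_fps_X_power[OF M, folded Y_def]
  obtain u where u: "u \<in> carrier (skew_ring_Dn n)" and dfts: "\<forall>q<n.
      dft_rotations n u q = fps_const (1/2) * (Y 0 q - fps_const \<i> * Y 1 q) \<and>
      dft_reflections n u q = fps_const (1/2) * (Y 0 q + fps_const \<i> * Y 1 q)"
    using ex_skew_ring_Dn_dft[of "\<lambda>q. fps_const (1/2) * (Y 0 q - fps_const \<i> * Y 1 q)"
        "\<lambda>q. fps_const (1/2) * (Y 0 q + fps_const \<i> * Y 1 q)"] by blast
  have "skew_act n u (O_basis j q) = O_combination n (\<lambda>i p. M i j p q)" if "j < 2" "q < n" for j q
  proof -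
    have "\<forall>j<2. dft_rotations n u q * fps_const (rbasis j) +
        dft_reflections n u q * fps_const (cnj (rbasis j)) = Y j q"
      using dfts \<open>q < n\<close>
        rbasis_combination_eq_iff[of "dft_rotations n u q" "dft_reflections n u q" "\<lambda>j. Y j q"]
      by simp
    then show ?thesis using that by (simp add: skew_act_O_basis Y)
  qed
  then have "skew_matrix n u = M"
    using M[unfolded M2H_ring_carrier_iff[OF n_pos]]
    by (intro ext) (auto simp: skew_matrix_def O_coord_O_combination[OF n_pos])
  then show ?thesis using u by blast
qed

end

theorem proposition6p3:
  fixes n :: nat
  assumes "n \<ge> 1"
  shows "\<exists>h. h \<in> ring_iso (skew_ring_Dn n) (M2H_ring n) \<and>
             (\<forall>r::real. \<forall>u \<in> carrier (skew_ring_Dn n).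
                h (skew_scale r u) = M2H_scale r (h u))"
proof -
  have n_pos: "0 < n" using assms by simp
  have "skew_matrix n \<in> ring_hom (skew_ring_Dn n) (M2H_ring n)"
    using n_pos
    by (auto simp: ring_hom_def skew_matrix_in_carrier skew_matrix_mult skew_matrix_add skew_matrix_one)
  moreover have "inj_on (skew_matrix n) (carrier (skew_ring_Dn n))"
    using skew_matrix_inj[OF n_pos] by (auto intro: inj_onI)
  moreover have "skew_matrix n ` carrier (skew_ring_Dn n) = carrier (M2H_ring n)"
    using skew_matrix_in_carrier[OF n_pos] skew_matrix_surj[OF n_pos] by blast
  ultimately show ?thesis
    using skew_matrix_scale[OF n_pos] by (auto simp: ring_iso_def bij_betw_def)
qed

end
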